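(* Let $M$ be a monoid in $\mathcal{C}$ and let $V=\mathbb{R}\otimes_\mathbb{Z}\mathrm{gp}(M)$. The following are equivalent: (a) $M$ is a UFM; (b) every face submonoid of $M$ is a UFM; (c) $|\mathcal{A}(M)|=\dim\mathsf{cone}_V(M)$.
   Context: Convention: all monoids are commutative, cancellative, and reduced (only invertible element $0$), written additively; $M^\bullet=M\setminus\{0\}$; atoms $\mathcal{A}(M)=M^\bullet\setminus(M^\bullet+M^\bullet)$. $\mathcal{C}$ is the class of monoids isomorphic to a submonoid of a free commutative monoid of finite rank (equivalently, of $(\mathbb{N}^d,+)$). $M$ is regarded as a submonoid of $V=\mathbb{R}\otimes_\mathbb{Z}\mathrm{gp}(M)$ via $M\hookrightarrow\mathrm{gp}(M)\hookrightarrow V$; $\mathsf{cone}_V(M)$ is the set of finite nonnegative real linear combinations of elements of $M$, and its dimension is that of its linear span. A face of a cone $C$ is a cone $F\subseteq C$ such that whenever $x,y\in C$ and $F$ meets the open segment $\{tx+(1-t)y:0<t<1\}$, then $x,y\in F$. A face submonoid of $M$ is a submonoid $M\cap F$ with $F$ a face of $\mathsf{cone}_V(M)$. A monoid is a UFM (unique factorization monoid) if every element is a sum of atoms and this sum is unique up to order (equivalently, every nonzero element is a sum of prime elements). *)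

theory Defs
  imports "HOL-Analysis.Analysis" "HOL-Library.Multiset"
begin

text \<open>Monoids in class C are modelled (up to isomorphism) as submonoids of
  the free commutative monoid nat^'n of finite rank CARD('n).\<close>

definition submonoid_nat :: "(nat^'n::finite) set \<Rightarrow> bool" where
  "submonoid_nat M \<longleftrightarrow> 0 \<in> M \<and> (\<forall>a\<in>M. \<forall>b\<in>M. a + b \<in> M)"

definition atoms :: "(nat^'n::finite) set \<Rightarrow> (nat^'n) set" where
  "atoms M = {a \<in> M. a \<noteq> 0 \<and>
      \<not> (\<exists>b\<in>M. \<exists>c\<in>M. b \<noteq> 0 \<and> c \<noteq> 0 \<and> a = b + c)}"

definition is_UFM :: "(nat^'n::finite) set \<Rightarrow> bool" where
  "is_UFM M \<longleftrightarrow> (\<forall>x\<in>M. \<exists>!A. set_mset A \<subseteq> atoms M \<and> sum_mset A = x)"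

text \<open>Embedding of nat^n into real^n; the real span of the image of M is
  canonically R (x)_Z gp(M).\<close>
definition embR :: "nat^'n::finite \<Rightarrow> real^'n" where
  "embR x = (\<chi> i. real (x $ i))"

definition real_cone :: "'a::real_vector set \<Rightarrow> 'a set" where
  "real_cone S = {y. \<exists>F c. finite F \<and> F \<subseteq> S \<and> (\<forall>x\<in>F. 0 \<le> c x) \<and>
                          y = (\<Sum>x\<in>F. c x *\<^sub>R x)}"

definition monoid_cone :: "(nat^'n::finite) set \<Rightarrow> (real^'n) set" where
  "monoid_cone M = real_cone (embR ` M)"

definition face_of_cone :: "'a::real_vector set \<Rightarrow> 'a set \<Rightarrow> bool" where
  "face_of_cone F C \<longleftrightarrow> F \<subseteq> C \<and> real_cone F = F \<and>
     (\<forall>x\<in>C. \<forall>y\<in>C. (\<exists>t. 0 < t \<and> t < 1 \<and> t *\<^sub>R x + (1 - t) *\<^sub>R y \<in> F)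
        \<longrightarrow> x \<in> F \<and> y \<in> F)"

definition face_submonoids :: "(nat^'n::finite) set \<Rightarrow> (nat^'n) set set" where
  "face_submonoids M = {{m \<in> M. embR m \<in> F} | F. face_of_cone F (monoid_cone M)}"

end

theory Submission
  imports Defs
begin

text \<open>A submonoid of \<open>\<nat>\<^sup>n\<close> is atomic, so it is a UFM iff distinct multisets of atoms
  have distinct sums. That injectivity is exactly linear independence of the atoms in \<open>V\<close>:
  a real linear relation between integer vectors can be made integral by Gaussian elimination,
  and the positive and negative parts of an integral relation are two factorisations of one
  element. As the atoms span the cone, independence means that their number is \<open>dim V\<close>.
  For faces: a face containing \<open>x + y\<close> contains \<open>x\<close>, so face submonoids are divisor-closed, and
  divisor-closed submonoids of a UFM are UFMs; conversely the whole cone is a face.\<close>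

definition nontrivial_solution ::
    "('a \<Rightarrow> 'b \<Rightarrow> 'r::comm_ring) \<Rightarrow> 'b set \<Rightarrow> 'a set \<Rightarrow> ('a \<Rightarrow> 'r) \<Rightarrow> bool" where
  "nontrivial_solution v I S u \<longleftrightarrow>
     (\<forall>i\<in>I. (\<Sum>j\<in>S. u j * v j i) = 0) \<and> (\<exists>j\<in>S. u j \<noteq> 0)"

text \<open>Coefficient of unknown \<open>j\<close> in equation \<open>i\<close> after cancelling the pivot unknown \<open>p\<close>
  by means of equation \<open>k\<close> (fraction-free: equation \<open>i\<close> is first scaled by \<open>v p k\<close>).\<close>

definition eliminate :: "('a \<Rightarrow> 'b \<Rightarrow> 'r::comm_ring) \<Rightarrow> 'a \<Rightarrow> 'b \<Rightarrow> 'a \<Rightarrow> 'b \<Rightarrow> 'r" where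
  "eliminate v p k j i = v p k * v j i - v j k * v p i"

lemma nontrivial_solution_eliminate:
  fixes v :: "'a \<Rightarrow> 'b \<Rightarrow> 'r::idom"
  assumes sol: "nontrivial_solution v (insert k I) S u"
    and "finite S" "p \<in> S" "v p k \<noteq> 0"
  shows "nontrivial_solution (eliminate v p k) I (S - {p}) u"
proof -
  have split: "(\<Sum>j\<in>S. u j * v j i) = u p * v p i + (\<Sum>j\<in>S - {p}. u j * v j i)" for i
    using assms(2,3) by (simp add: sum.remove)
  have eq: "(\<Sum>j\<in>S - {p}. u j * v j i) = - (u p * v p i)" if "i \<in> insert k I" for i
    using sol that split[of i] unfolding nontrivial_solution_def
    by (auto simp: eq_neg_iff_add_eq_0 add.commute)
  have "(\<Sum>j\<in>S - {p}. u j * eliminate v p k j i) =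
      v p k * (\<Sum>j\<in>S - {p}. u j * v j i) - v p i * (\<Sum>j\<in>S - {p}. u j * v j k)" for i
    unfolding eliminate_def by (simp add: sum_distrib_left sum_subtractf algebra_simps)
  then have "(\<Sum>j\<in>S - {p}. u j * eliminate v p k j i) = 0" if "i \<in> I" for i
    using eq[of i] eq[of k] that by (simp add: algebra_simps)
  moreover have "\<exists>j\<in>S - {p}. u j \<noteq> 0"
  proof (rule ccontr)
    assume "\<not> ?thesis"
    then have "u p * v p k = 0" using eq[of k] by simp
    with \<open>v p k \<noteq> 0\<close> have "u p = 0" by simp
    with \<open>\<not> ?thesis\<close> sol show False unfolding nontrivial_solution_def by blast
  qed
  ultimately show ?thesis unfolding nontrivial_solution_def by blast
qed

lemma nontrivial_solution_lift:
  fixes v :: "'a \<Rightarrow> 'b \<Rightarrow> 'r::idom"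
  assumes sol: "nontrivial_solution (eliminate v p k) I (S - {p}) z"
    and "finite S" "p \<in> S" "v p k \<noteq> 0"
  defines "z' \<equiv> \<lambda>j. if j = p then - (\<Sum>j\<in>S - {p}. z j * v j k) else v p k * z j"
  shows "nontrivial_solution v (insert k I) S z'"
proof -
  have "(\<Sum>j\<in>S - {p}. z' j * v j i) = (\<Sum>j\<in>S - {p}. v p k * z j * v j i)" for i
    by (rule sum.cong) (auto simp: z'_def)
  then have reduce: "(\<Sum>j\<in>S. z' j * v j i) = (\<Sum>j\<in>S - {p}. z j * eliminate v p k j i)" for i
    using assms(2,3) unfolding eliminate_def
    by (simp add: sum.remove z'_def sum_distrib_left sum_distrib_right sum_subtractf algebra_simps)
  have "eliminate v p k j k = 0" for j
    unfolding eliminate_def by simp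
  then have "\<forall>i\<in>insert k I. (\<Sum>j\<in>S. z' j * v j i) = 0"
    using sol unfolding reduce nontrivial_solution_def by simp
  moreover from sol obtain j where "j \<in> S - {p}" "z j \<noteq> 0"
    unfolding nontrivial_solution_def by blast
  then have "\<exists>j\<in>S. z' j \<noteq> 0"
    using \<open>v p k \<noteq> 0\<close> by (auto simp: z'_def)
  ultimately show ?thesis unfolding nontrivial_solution_def by blast
qed

lemma nontrivial_int_solution_exists:
  fixes v :: "'a \<Rightarrow> 'b \<Rightarrow> int" and u :: "'a \<Rightarrow> 'r::{idom,ring_char_0}"
  assumes "finite I" "finite S" "nontrivial_solution (\<lambda>j i. of_int (v j i)) I S u"
  shows "\<exists>z. nontrivial_solution v I S z"
  using assms
proof (induction I arbitrary: S u v rule: finite_induct)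
  case empty
  then show ?case
    by (intro exI[of _ "\<lambda>_. 1"]) (auto simp: nontrivial_solution_def)
next
  case (insert k I)
  show ?case
  proof (cases "\<exists>p\<in>S. v p k \<noteq> 0")
    case False
    then have "nontrivial_solution (\<lambda>j i. of_int (v j i)) I S u"
      using insert.prems by (simp add: nontrivial_solution_def)
    then obtain z where "nontrivial_solution v I S z"
      using insert.IH insert.prems by blast
    then have "nontrivial_solution v (insert k I) S z"
      using False by (simp add: nontrivial_solution_def)
    then show ?thesis by blast
  next
    case True
    then obtain p where p: "p \<in> S" "v p k \<noteq> 0" by blast
    have "nontrivial_solution (eliminate (\<lambda>j i. of_int (v j i)) p k) I (S - {p}) u"
      using nontrivial_solution_eliminate[OF insert.prems(2) insert.prems(1)] p by simp
    moreover have "eliminate (\<lambda>j i. of_int (v j i)) p k = (\<lambda>j i. of_int (eliminate v p k j i) :: 'r)"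
      by (simp add: eliminate_def fun_eq_iff)
    ultimately have "nontrivial_solution (\<lambda>j i. of_int (eliminate v p k j i)) I (S - {p}) u"
      by (simp only:)
    then obtain z where "nontrivial_solution (eliminate v p k) I (S - {p}) z"
      using insert.IH insert.prems by blast
    then show ?thesis
      using nontrivial_solution_lift[of v p k I S z] insert.prems(1) p by blast
  qed
qed

lemma independent_iff_card_eq_dim:
  fixes B :: "'a::euclidean_space set"
  shows "independent B \<longleftrightarrow> finite B \<and> card B = dim B"
  by (metis card_eq_dim dim_eq_card_independent finiteI_independent order_refl span_superset)

lemma real_cone_eq_convex_cone_hull: "real_cone S = convex_cone hull S"
proof
  show "real_cone S \<subseteq> convex_cone hull S"
  proof
    fix y assume "y \<in> real_cone S"
    then obtain F c where F: "finite F" "F \<subseteq> S" "\<forall>x\<in>F. 0 \<le> c x"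
      and y: "y = (\<Sum>x\<in>F. c x *\<^sub>R x)"
      unfolding real_cone_def by blast
    have "(\<Sum>x\<in>F. c x *\<^sub>R x) \<in> convex_cone hull S"
      using F by (induction F rule: finite_induct)
        (auto intro: convex_cone_hull_add convex_cone_hull_mul hull_inc convex_cone_hull_contains_0)
    then show "y \<in> convex_cone hull S" using y by simp
  qed
next
  show "convex_cone hull S \<subseteq> real_cone S"
  proof
    fix z assume "z \<in> convex_cone hull S"
    then consider "z = 0" | c y where "0 \<le> c" "y \<in> convex hull S" "z = c *\<^sub>R y"
      unfolding convex_cone_hull_convex_hull by auto
    then show "z \<in> real_cone S"
    proof cases
      case 1
      then show ?thesis unfolding real_cone_def by (intro CollectI exI[of _ "{}"]) auto
    next
      case 2
      then obtain F u where "finite F" "F \<subseteq> S" "\<forall>x\<in>F. 0 \<le> u x" "y = (\<Sum>x\<in>F. u x *\<^sub>R x)"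
        unfolding convex_hull_explicit by blast
      with 2 show ?thesis unfolding real_cone_def
        by (intro CollectI exI[of _ F] exI[of _ "\<lambda>x. c * u x"]) (auto simp: scaleR_sum_right)
    qed
  qed
qed

lemma real_cone_real_cone [simp]: "real_cone (real_cone S) = real_cone S"
  by (simp add: real_cone_eq_convex_cone_hull hull_hull)

lemma subset_real_cone: "S \<subseteq> real_cone S"
  by (simp add: real_cone_eq_convex_cone_hull hull_subset)

lemma span_real_cone [simp]: "span (real_cone S) = span S"
proof -
  have "real_cone S \<subseteq> span S"
    unfolding real_cone_eq_convex_cone_hull
    by (rule hull_minimal) (simp_all add: span_superset convex_cone_span)
  moreover have "S \<subseteq> span (real_cone S)"
    by (rule subset_trans[OF subset_real_cone span_superset])
  ultimately show ?thesis
    by (simp add: span_eq)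
qed

lemma face_of_cone_self: "face_of_cone (real_cone S) (real_cone S)"
  using real_cone_real_cone unfolding face_of_cone_def by blast

lemma face_of_cone_scaleR:
  assumes "face_of_cone F C" "x \<in> F" "0 \<le> c"
  shows "c *\<^sub>R x \<in> F"
  using assms subset_real_cone unfolding face_of_cone_def real_cone_eq_convex_cone_hull
  by (metis convex_cone_hull_mul subsetD)

lemma face_of_real_cone_summand:
  assumes F: "face_of_cone F (real_cone S)"
    and x: "x \<in> real_cone S" and y: "y \<in> real_cone S" and xy: "x + y \<in> F"
  shows "x \<in> F"
proof -
  have cone2: "2 *\<^sub>R x \<in> real_cone S" "2 *\<^sub>R y \<in> real_cone S"
    using x y by (simp_all add: real_cone_eq_convex_cone_hull convex_cone_hull_mul)
  have "\<exists>t. 0 < t \<and> t < 1 \<and> t *\<^sub>R (2 *\<^sub>R x) + (1 - t) *\<^sub>R (2 *\<^sub>R y) \<in> F"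
    using xy by (intro exI[of _ "1/2"]) simp
  then have "2 *\<^sub>R x \<in> F"
    using F cone2 unfolding face_of_cone_def by blast
  from face_of_cone_scaleR[OF F this, of "1/2"] show ?thesis
    by simp
qed

lemma sum_mset_mem_submonoid_nat:
  assumes "submonoid_nat M" "set_mset X \<subseteq> M"
  shows "sum_mset X \<in> M"
  using assms(2) by (induction X) (use assms(1) in \<open>auto simp: submonoid_nat_def\<close>)

lemma atoms_subset: "atoms M \<subseteq> M"
  unfolding atoms_def by auto

lemma submonoid_nat_atomic:
  assumes "submonoid_nat M" "x \<in> M"
  shows "\<exists>X. set_mset X \<subseteq> atoms M \<and> sum_mset X = x"
  using assms(2)
proof (induction "sum (($) x) UNIV" arbitrary: x rule: less_induct)
  case less
  show ?case
  proof (cases "x = 0 \<or> x \<in> atoms M")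
    case True
    then show ?thesis
    proof
      assume "x = 0"
      then show ?thesis by (intro exI[of _ "{#}"]) simp
    next
      assume "x \<in> atoms M"
      then show ?thesis by (intro exI[of _ "{#x#}"]) simp
    qed
  next
    case False
    with less.prems obtain b c where bc: "b \<in> M" "c \<in> M" "b \<noteq> 0" "c \<noteq> 0" "x = b + c"
      unfolding atoms_def by auto
    have coord_sum_pos: "0 < sum (($) y) UNIV" if "y \<noteq> 0" for y :: "nat^'a"
      using that by (auto simp: vec_eq_iff intro: gr0I)
    have "sum (($) x) UNIV = sum (($) b) UNIV + sum (($) c) UNIV"
      using bc(5) by (simp add: sum.distrib)
    then have "sum (($) b) UNIV < sum (($) x) UNIV" "sum (($) c) UNIV < sum (($) x) UNIV"
      using coord_sum_pos[OF bc(3)] coord_sum_pos[OF bc(4)] by linarith+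
    then obtain B C where "set_mset B \<subseteq> atoms M" "sum_mset B = b"
      "set_mset C \<subseteq> atoms M" "sum_mset C = c"
      using less.hyps bc(1,2) by meson
    then show ?thesis
      using bc(5) by (intro exI[of _ "B + C"]) auto
  qed
qed

lemma is_UFM_iff_sum_mset_inj:
  assumes "submonoid_nat M"
  shows "is_UFM M \<longleftrightarrow> (\<forall>X Y. set_mset X \<subseteq> atoms M \<longrightarrow> set_mset Y \<subseteq> atoms M \<longrightarrow>
      sum_mset X = sum_mset Y \<longrightarrow> X = Y)"
proof
  assume UFM: "is_UFM M"
  show "\<forall>X Y. set_mset X \<subseteq> atoms M \<longrightarrow> set_mset Y \<subseteq> atoms M \<longrightarrow>
      sum_mset X = sum_mset Y \<longrightarrow> X = Y"
  proof (intro allI impI)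
    fix X Y assume X: "set_mset X \<subseteq> atoms M" and Y: "set_mset Y \<subseteq> atoms M"
      and XY: "sum_mset X = sum_mset Y"
    have "sum_mset X \<in> M"
      using X atoms_subset sum_mset_mem_submonoid_nat[OF assms] by blast
    with UFM have unique: "\<exists>!Z. set_mset Z \<subseteq> atoms M \<and> sum_mset Z = sum_mset X"
      unfolding is_UFM_def by blast
    show "X = Y"
      using the1_equality[OF unique, of X] the1_equality[OF unique, of Y] X Y XY by simp
  qed
next
  assume inj: "\<forall>X Y. set_mset X \<subseteq> atoms M \<longrightarrow> set_mset Y \<subseteq> atoms M \<longrightarrow>
      sum_mset X = sum_mset Y \<longrightarrow> X = Y"
  show "is_UFM M"
    unfolding is_UFM_def
  proof
    fix x assume "x \<in> M"
    then obtain X where "set_mset X \<subseteq> atoms M" "sum_mset X = x"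
      using submonoid_nat_atomic[OF assms] by blast
    with inj show "\<exists>!X. set_mset X \<subseteq> atoms M \<and> sum_mset X = x"
      by (intro ex1I[of _ X]) auto
  qed
qed

lemma atoms_divisor_closed:
  assumes "N \<subseteq> M" and divisor_closed: "\<And>b c. b \<in> M \<Longrightarrow> c \<in> M \<Longrightarrow> b + c \<in> N \<Longrightarrow> b \<in> N"
  shows "atoms N = atoms M \<inter> N"
proof -
  have summands: "b \<in> N \<and> c \<in> N" if "b \<in> M" "c \<in> M" "b + c \<in> N" for b c
    using divisor_closed[of b c] divisor_closed[of c b] that by (simp add: add.commute)
  show ?thesis
  proof
    show "atoms N \<subseteq> atoms M \<inter> N"
      using assms(1) summands unfolding atoms_def by blast
    show "atoms M \<inter> N \<subseteq> atoms N"
      using assms(1) unfolding atoms_def by blast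
  qed
qed

lemma is_UFM_divisor_closed:
  assumes "submonoid_nat M" "is_UFM M" "N \<subseteq> M"
    and divisor_closed: "\<And>b c. b \<in> M \<Longrightarrow> c \<in> M \<Longrightarrow> b + c \<in> N \<Longrightarrow> b \<in> N"
  shows "is_UFM N"
  unfolding is_UFM_def
proof
  fix x assume "x \<in> N"
  with assms(3) have "x \<in> M" by blast
  with assms(2) have "\<exists>!X. set_mset X \<subseteq> atoms M \<and> sum_mset X = x"
    unfolding is_UFM_def by (rule bspec)
  then obtain X where X: "set_mset X \<subseteq> atoms M \<and> sum_mset X = x"
    and unique: "\<forall>Y. set_mset Y \<subseteq> atoms M \<and> sum_mset Y = x \<longrightarrow> Y = X"
    by (rule ex1E)
  have "a \<in> N" if "a \<in># X" for a
  proof (rule divisor_closed)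
    have "set_mset X \<subseteq> M"
      using X atoms_subset[of M] by blast
    then show "a \<in> M" "sum_mset (X - {#a#}) \<in> M"
      using that sum_mset_mem_submonoid_nat[OF assms(1)] by (auto dest: in_diffD)
    show "a + sum_mset (X - {#a#}) \<in> N"
      using that X \<open>x \<in> N\<close> by (simp add: sum_mset.remove)
  qed
  moreover have atoms_N: "atoms N = atoms M \<inter> N"
    using divisor_closed by (intro atoms_divisor_closed[OF assms(3)]) blast
  ultimately have "set_mset X \<subseteq> atoms N"
    using X by blast
  moreover have "Y = X" if "set_mset Y \<subseteq> atoms N" "sum_mset Y = x" for Y
    using unique that atoms_N by blast
  ultimately show "\<exists>!X. set_mset X \<subseteq> atoms N \<and> sum_mset X = x"
    using X by blast
qed

lemma embR_add: "embR (x + y) = embR x + embR y"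
  by (simp add: embR_def vec_eq_iff)

lemma inj_embR: "inj embR"
  by (auto simp: inj_def embR_def vec_eq_iff)

lemma inj_on_embR: "inj_on embR A"
  using inj_embR by (rule inj_on_subset) simp

lemma embR_sum_mset:
  assumes "finite A" "set_mset X \<subseteq> A"
  shows "embR (sum_mset X) = (\<Sum>a\<in>A. real (count X a) *\<^sub>R embR a)"
  using assms(2)
proof (induction X)
  case empty
  then show ?case by (simp add: embR_def vec_eq_iff)
next
  case (add x X)
  then have "x \<in> A" by simp
  have "(\<Sum>a\<in>A. real (count (add_mset x X) a) *\<^sub>R embR a) =
      (\<Sum>a\<in>A. real (count X a) *\<^sub>R embR a) + (\<Sum>a\<in>A. (if a = x then embR a else 0))"
    by (simp add: sum.distrib[symmetric] scaleR_add_left) (rule sum.cong; simp add: scaleR_add_left)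
  also have "\<dots> = embR (sum_mset (add_mset x X))"
    using add \<open>x \<in> A\<close> assms(1) by (simp add: embR_add add.commute)
  finally show ?case ..
qed

lemma span_embR_atoms:
  assumes "submonoid_nat M"
  shows "span (embR ` M) = span (embR ` atoms M)"
proof -
  have "embR x \<in> span (embR ` atoms M)" if "x \<in> M" for x
  proof -
    obtain X where X: "set_mset X \<subseteq> atoms M" "sum_mset X = x"
      using submonoid_nat_atomic[OF assms \<open>x \<in> M\<close>] by blast
    then have "embR x = (\<Sum>a\<in>set_mset X. real (count X a) *\<^sub>R embR a)"
      using embR_sum_mset[of "set_mset X" X] by simp
    also have "\<dots> \<in> span (embR ` atoms M)"
      using X(1) by (intro span_sum span_scale span_base) blast
    finally show ?thesis .
  qed
  then show ?thesis
    using atoms_subset[of M] by (auto simp: span_eq intro: span_base)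
qed

lemma sum_mset_inj_if_independent_embR:
  assumes indep: "independent (embR ` A)"
    and "set_mset X \<subseteq> A" "set_mset Y \<subseteq> A" "sum_mset X = sum_mset Y"
  shows "X = Y"
proof (rule multiset_eqI)
  fix a
  have "finite A"
    using independent_bound_general[OF indep] finite_image_iff[OF inj_on_embR] by blast
  define c where "c v = real (count X (inv embR v)) - real (count Y (inv embR v))" for v
  have "(\<Sum>v\<in>embR ` A. c v *\<^sub>R v) =
      (\<Sum>a\<in>A. real (count X a) *\<^sub>R embR a) - (\<Sum>a\<in>A. real (count Y a) *\<^sub>R embR a)"
    by (simp add: sum.reindex[OF inj_on_embR] c_def inv_f_f[OF inj_embR] scaleR_diff_left sum_subtractf)
  also have "\<dots> = 0"
    using embR_sum_mset[OF \<open>finite A\<close> assms(2)] embR_sum_mset[OF \<open>finite A\<close> assms(3)] assms(4)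
    by simp
  finally have c_0: "\<forall>v\<in>embR ` A. c v = 0"
    using indep unfolding independent_explicit by blast
  show "count X a = count Y a"
  proof (cases "a \<in> A")
    case True
    then show ?thesis
      using c_0 by (auto simp: c_def inv_f_f[OF inj_embR])
  next
    case False
    then have "a \<notin># X" "a \<notin># Y"
      using assms(2,3) by blast+
    then show ?thesis
      by (simp add: not_in_iff)
  qed
qed

lemma int_relation_if_dependent_embR:
  assumes "dependent (embR ` A)"
  obtains S z where "finite S" "S \<subseteq> A" "(\<Sum>a\<in>S. real_of_int (z a) *\<^sub>R embR a) = 0"
    "\<exists>a\<in>S. z a \<noteq> 0"
proof -
  obtain T u where T: "finite T" "T \<subseteq> embR ` A" "(\<Sum>v\<in>T. u v *\<^sub>R v) = 0"
    "\<exists>v\<in>T. u v \<noteq> 0"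
    using assms unfolding dependent_explicit by blast
  define S where "S = A \<inter> embR -` T"
  have T_eq: "T = embR ` S"
    using T(2) by (auto simp: S_def)
  then have "finite S"
    using T(1) finite_image_iff[OF inj_on_embR[of S]] by simp
  have "(\<Sum>a\<in>S. u (embR a) *\<^sub>R embR a) = 0"
    using T(3) by (simp add: T_eq sum.reindex[OF inj_on_embR])
  then have "nontrivial_solution (\<lambda>a i. of_int (int (a $ i))) UNIV S (u \<circ> embR)"
    using T(4) by (auto simp: nontrivial_solution_def T_eq vec_eq_iff embR_def)
  then obtain z where "nontrivial_solution (\<lambda>a i. int (a $ i)) UNIV S z"
    using nontrivial_int_solution_exists[OF finite \<open>finite S\<close>, where v = "\<lambda>a i. int (a $ i)"]
    by blast
  then have relation: "\<forall>i. (\<Sum>a\<in>S. z a * int (a $ i)) = 0"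
    and nonzero: "\<exists>a\<in>S. z a \<noteq> 0"
    unfolding nontrivial_solution_def by auto
  have "(\<Sum>a\<in>S. real_of_int (z a) *\<^sub>R embR a) $ i = real_of_int (\<Sum>a\<in>S. z a * int (a $ i))" for i
    by (simp add: embR_def)
  then have "(\<Sum>a\<in>S. real_of_int (z a) *\<^sub>R embR a) = 0"
    using relation by (simp add: vec_eq_iff)
  moreover have "S \<subseteq> A"
    by (simp add: S_def)
  ultimately show thesis
    using that \<open>finite S\<close> nonzero by blast
qed

lemma sum_mset_collision_if_dependent_embR:
  assumes "dependent (embR ` A)"
  obtains X Y where "set_mset X \<subseteq> A" "set_mset Y \<subseteq> A" "X \<noteq> Y" "sum_mset X = sum_mset Y"
proof -
  obtain S z where S: "finite S" "S \<subseteq> A"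
    and relation: "(\<Sum>a\<in>S. real_of_int (z a) *\<^sub>R embR a) = 0" and nonzero: "\<exists>a\<in>S. z a \<noteq> 0"
    using int_relation_if_dependent_embR[OF assms] by blast
  define X where "X = (\<Sum>a\<in>S. replicate_mset (nat (z a)) a)"
  define Y where "Y = (\<Sum>a\<in>S. replicate_mset (nat (- z a)) a)"
  have count_X: "count X a = (if a \<in> S then nat (z a) else 0)" for a
    using S(1) by (simp add: X_def count_sum)
  have count_Y: "count Y a = (if a \<in> S then nat (- z a) else 0)" for a
    using S(1) by (simp add: Y_def count_sum)
  have set_XY: "set_mset X \<subseteq> S" "set_mset Y \<subseteq> S"
    by (auto simp: count_X count_Y simp flip: count_greater_zero_iff split: if_splits)
  have pos_neg: "real (nat k) - real (nat (- k)) = real_of_int k" for k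
    by (cases "k \<ge> 0") auto
  have "embR (sum_mset X) - embR (sum_mset Y) = (\<Sum>a\<in>S. real_of_int (z a) *\<^sub>R embR a)"
    using embR_sum_mset[OF S(1) set_XY(1)] embR_sum_mset[OF S(1) set_XY(2)]
    by (simp add: count_X count_Y pos_neg sum_subtractf[symmetric] scaleR_diff_left[symmetric])
  then have "embR (sum_mset X) = embR (sum_mset Y)"
    using relation by simp
  then have "sum_mset X = sum_mset Y"
    by (rule injD[OF inj_embR])
  moreover from nonzero obtain a where "a \<in> S" "z a \<noteq> 0"
    by blast
  then have "count X a \<noteq> count Y a"
    by (auto simp: count_X count_Y)
  then have "X \<noteq> Y"
    by blast
  ultimately show thesis
    using that set_XY S(2) by blast
qed

lemma is_UFM_iff_independent_atoms:
  assumes "submonoid_nat M"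
  shows "is_UFM M \<longleftrightarrow> independent (embR ` atoms M)"
  unfolding is_UFM_iff_sum_mset_inj[OF assms]
  by (metis sum_mset_collision_if_dependent_embR sum_mset_inj_if_independent_embR)

lemma is_UFM_face_submonoid:
  assumes "submonoid_nat M" "is_UFM M" "N \<in> face_submonoids M"
  shows "is_UFM N"
proof -
  from assms(3) obtain F where F: "face_of_cone F (real_cone (embR ` M))"
    and N: "N = {m \<in> M. embR m \<in> F}"
    unfolding face_submonoids_def monoid_cone_def by blast
  have in_cone: "embR m \<in> real_cone (embR ` M)" if "m \<in> M" for m
    using that subset_real_cone[of "embR ` M"] by blast
  show ?thesis
  proof (rule is_UFM_divisor_closed[OF assms(1,2)])
    show "N \<subseteq> M"
      using N by blast
  next
    fix b c assume "b \<in> M" "c \<in> M" "b + c \<in> N"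
    then show "b \<in> N"
      using face_of_real_cone_summand[OF F in_cone in_cone] N by (simp add: embR_add)
  qed
qed

lemma self_mem_face_submonoids: "M \<in> face_submonoids M"
proof -
  have "M = {m \<in> M. embR m \<in> real_cone (embR ` M)}"
    using subset_real_cone[of "embR ` M"] by blast
  then show ?thesis
    unfolding face_submonoids_def monoid_cone_def using face_of_cone_self[of "embR ` M"] by blast
qed

theorem mainTheorem7:
  fixes M :: "(nat^'n::finite) set"
  assumes "submonoid_nat M"
  shows "(is_UFM M \<longleftrightarrow> (\<forall>N\<in>face_submonoids M. is_UFM N))
       \<and> (is_UFM M \<longleftrightarrow> (finite (atoms M) \<and> card (atoms M) = dim (monoid_cone M)))"
proof
  show "is_UFM M \<longleftrightarrow> (\<forall>N\<in>face_submonoids M. is_UFM N)"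
    using is_UFM_face_submonoid[OF assms] self_mem_face_submonoids by blast
next
  have "dim (monoid_cone M) = dim (embR ` atoms M)"
    unfolding monoid_cone_def by (metis dim_span span_real_cone span_embR_atoms[OF assms])
  then show "is_UFM M \<longleftrightarrow> (finite (atoms M) \<and> card (atoms M) = dim (monoid_cone M))"
    by (simp add: is_UFM_iff_independent_atoms[OF assms] independent_iff_card_eq_dim
        card_image[OF inj_on_embR] finite_image_iff[OF inj_on_embR])
qed

end
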